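(* For any positive definite $d\times d$ matrix valued measure $\boldsymbol\mu$ on the unit circle $\mathbb T$ and any $d$-dimensional (row) vector valued Laurent polynomial $\mathbf f$, \[F(z,\mathbf f\,d\boldsymbol\mu\,\mathbf f^\dagger)\in L^2_{d\theta/2\pi}(\mathbb T)\iff \mathbf f(z)\,\mathbf F(z,d\boldsymbol\mu)\,\mathbf f(z)^\dagger\in L^2_{d\theta/2\pi}(\mathbb T).\]
   Context: A $d$-dimensional vector valued Laurent polynomial is $\mathbf f(z)=\sum_{k=p}^q\mathbf a_kz^k$ with $\mathbf a_k\in\mathbb C^d$ (row vectors), $p\le q$ integers; $\mathbf f(z)^\dagger$ denotes the conjugate transpose (including conjugation of $z$), so on $\mathbb T$, $\mathbf f\,d\boldsymbol\mu\,\mathbf f^\dagger$ is a scalar positive finite measure. For a (scalar or matrix valued) finite positive measure $\nu$ on $\mathbb T$, its Carathéodory function is $F(z,d\nu)=\int_{\mathbb T}\frac{t+z}{t-z}\,d\nu(t)$ for $|z|<1$ (matrix valued when $\nu$ is, written $\mathbf F$); it is identified on $\mathbb T$ with its radial limits $\lim_{r\uparrow1}F(re^{i\theta},d\nu)$, which exist for Lebesgue a.e. $\theta$, and $L^2_{d\theta/2\pi}(\mathbb T)$-membership refers to these boundary values. *)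

theory Defs
  imports "HOL-Analysis.Analysis"
begin

definition lpoly :: "(int \<Rightarrow> complex^'d::finite) \<Rightarrow> int \<Rightarrow> int \<Rightarrow> complex \<Rightarrow> complex^'d" where
  "lpoly a p q z = (\<Sum>k\<in>{p..q}. (z powi k) *s a k)"

definition qf :: "complex^'d::finite^'d \<Rightarrow> complex^'d \<Rightarrow> complex" where
  "qf A v = (\<Sum>i\<in>UNIV. \<Sum>j\<in>UNIV. v $ i * A $ i $ j * cnj (v $ j))"

definition psd_matrix :: "complex^'d::finite^'d \<Rightarrow> bool" where
  "psd_matrix A \<longleftrightarrow> (\<forall>v. Im (qf A v) = 0 \<and> Re (qf A v) \<ge> 0)"

text \<open>A d x d matrix valued (positive) measure on T, given as d mu = W dM, with M a finite
  positive measure on T and W a measurable, M-integrable, positive semidefinite matrix density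
  (every matrix measure has this form, e.g. with M its trace measure).\<close>
definition matrix_measure :: "complex measure \<Rightarrow> (complex \<Rightarrow> complex^'d::finite^'d) \<Rightarrow> bool" where
  "matrix_measure M W \<longleftrightarrow>
     finite_measure M \<and> space M = sphere 0 1 \<and> sets M = sets (restrict_space borel (sphere 0 1)) \<and>
     (\<forall>i j. integrable M (\<lambda>t. W t $ i $ j)) \<and> (\<forall>t\<in>sphere 0 1. psd_matrix (W t))"

definition pd_matrix_measure :: "complex measure \<Rightarrow> (complex \<Rightarrow> complex^'d::finite^'d) \<Rightarrow> bool" where
  "pd_matrix_measure M W \<longleftrightarrow> matrix_measure M W \<and>
     (\<forall>(b :: int \<Rightarrow> complex^'d) r s. r \<le> s \<and> (\<exists>k\<in>{r..s}. b k \<noteq> 0) \<longrightarrow>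
        (LINT t|M. Re (qf (W t) (lpoly b r s t))) > 0)"

definition cara :: "complex measure \<Rightarrow> complex \<Rightarrow> complex" where
  "cara \<nu> z = (LINT t|\<nu>. (t + z) / (t - z))"

definition cara_mat :: "complex measure \<Rightarrow> (complex \<Rightarrow> complex^'d::finite^'d) \<Rightarrow> complex \<Rightarrow> complex^'d^'d" where
  "cara_mat M W z = (\<chi> i j. LINT t|M. (t + z) / (t - z) * W t $ i $ j)"

definition L2_T :: "(complex \<Rightarrow> complex) \<Rightarrow> bool" where
  "L2_T G \<longleftrightarrow> (\<exists>h :: real \<Rightarrow> complex. h \<in> borel_measurable lborel \<and>
     (AE \<theta> in lborel. \<theta> \<in> {0..2*pi} \<longrightarrow> ((\<lambda>r. G (complex_of_real r * cis \<theta>)) \<longlongrightarrow> h \<theta>) (at_left 1)) \<and>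
     integrable (lebesgue_on {0..2*pi}) (\<lambda>\<theta>. (cmod (h \<theta>))\<^sup>2))"

end

theory Submission
  imports Defs
begin

text \<open>
  For \<open>|z| < 1\<close> the two functions differ by
  \<open>\<integral> (t + z)/(t - z) (f(z) W(t) f(z)^\<dagger> - f(t) W(t) f(t)^\<dagger>) dM(t)\<close>.
  Since a Laurent polynomial is bounded and Lipschitz on the annulus \<open>1/2 \<le> |z| \<le> 1\<close>, the
  integrand is dominated there by a multiple of \<open>|W(t)|\<close>, uniformly in \<open>z\<close>; along every radius
  it converges, also at \<open>t = z/|z|\<close>, where it becomes a difference quotient. By dominated
  convergence the difference has bounded, measurable radial limits, so the boundary values of the
  two functions differ by a bounded function and lie in \<open>L^2\<close> together.
\<close>

lemma borel_measurable_power_int [measurable (raw)]: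
  assumes [measurable]: "f \<in> borel_measurable M"
  shows "(\<lambda>x. (f x :: complex) powi k) \<in> borel_measurable M"
  by (cases "0 \<le> k") (simp_all add: power_int_def)

lemma borel_measurable_cis [measurable (raw)]:
  "f \<in> borel_measurable M \<Longrightarrow> (\<lambda>x. cis (f x)) \<in> borel_measurable M"
  by (rule measurable_compose[of f M borel]) (auto intro!: borel_measurable_continuous_onI continuous_intros)

lemma borel_measurable_cnj [measurable (raw)]:
  "f \<in> borel_measurable M \<Longrightarrow> (\<lambda>x. cnj (f x)) \<in> borel_measurable M"
  by (rule measurable_compose[of f M borel]) (auto intro!: borel_measurable_continuous_onI continuous_intros)

lemma lpoly_component: "lpoly a p q z $ i = (\<Sum>k\<in>{p..q}. z powi k * a k $ i)"
  unfolding lpoly_def by (simp add: sum_component)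

lemma borel_measurable_lpoly [measurable (raw)]:
  assumes [measurable]: "f \<in> borel_measurable M"
  shows "(\<lambda>x. lpoly a p q (f x) $ i) \<in> borel_measurable M"
  unfolding lpoly_component by measurable

lemma borel_measurable_qf [measurable (raw)]:
  assumes "\<And>i j. (\<lambda>x. A x $ i $ j) \<in> borel_measurable M" and "\<And>i. (\<lambda>x. v x $ i) \<in> borel_measurable M"
  shows "(\<lambda>x. qf (A x) (v x)) \<in> borel_measurable M"
  unfolding qf_def by (intro borel_measurable_sum borel_measurable_times borel_measurable_cnj assms)

lemma matrix_measureD:
  assumes "matrix_measure M W"
  shows "finite_measure M" "space M = sphere 0 1" "(\<lambda>t. t) \<in> borel_measurable M"
    "\<And>i j. integrable M (\<lambda>t. W t $ i $ j)" "\<And>i j. (\<lambda>t. W t $ i $ j) \<in> borel_measurable M"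
    "\<And>t. t \<in> space M \<Longrightarrow> psd_matrix (W t)"
proof -
  have "(\<lambda>t. t) \<in> borel_measurable (restrict_space borel (sphere (0::complex) 1))"
    by (rule measurable_restrict_space1) simp
  with assms show "(\<lambda>t. t) \<in> borel_measurable M"
    unfolding matrix_measure_def by (subst measurable_cong_sets) auto
qed (use assms in \<open>auto simp: matrix_measure_def intro: borel_measurable_integrable\<close>)

lemma L2_T_add_bounded:
  fixes G D :: "complex \<Rightarrow> complex" and E :: "real \<Rightarrow> complex"
  assumes "L2_T G"
    and lim: "\<And>\<theta>. ((\<lambda>r. D (complex_of_real r * cis \<theta>)) \<longlongrightarrow> E \<theta>) (at_left 1)"
    and E_meas: "E \<in> borel_measurable lborel" and E_bound: "\<And>\<theta>. norm (E \<theta>) \<le> B"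
  shows "L2_T (\<lambda>z. G z + D z)"
proof -
  obtain h where h_meas: "h \<in> borel_measurable lborel"
    and h_lim: "AE \<theta> in lborel. \<theta> \<in> {0..2*pi} \<longrightarrow> ((\<lambda>r. G (complex_of_real r * cis \<theta>)) \<longlongrightarrow> h \<theta>) (at_left 1)"
    and h_L2: "integrable (lebesgue_on {0..2*pi}) (\<lambda>\<theta>. (cmod (h \<theta>))\<^sup>2)"
    using assms(1) unfolding L2_T_def by blast
  have "integrable (lebesgue_on {0..2*pi}) (\<lambda>\<theta>. (cmod (h \<theta> + E \<theta>))\<^sup>2)"
  proof (rule Bochner_Integration.integrable_bound)
    have "finite_measure (lebesgue_on {0..2*pi})"
      by (rule finite_measure_lebesgue_on) simp
    then show "integrable (lebesgue_on {0..2*pi}) (\<lambda>\<theta>. 2 * (cmod (h \<theta>))\<^sup>2 + 2 * B\<^sup>2)"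
      using h_L2 finite_measure.integrable_const by auto
    have "(\<lambda>\<theta>. h \<theta> + E \<theta>) \<in> borel_measurable (lebesgue_on {0..2*pi})"
      using h_meas E_meas by (simp add: measurable_completion measurable_restrict_space1)
    then show "(\<lambda>\<theta>. (cmod (h \<theta> + E \<theta>))\<^sup>2) \<in> borel_measurable (lebesgue_on {0..2*pi})"
      by measurable
    show "AE \<theta> in lebesgue_on {0..2*pi}. norm ((cmod (h \<theta> + E \<theta>))\<^sup>2) \<le> norm (2 * (cmod (h \<theta>))\<^sup>2 + 2 * B\<^sup>2)"
    proof (intro AE_I2)
      fix \<theta>
      have "(cmod (h \<theta> + E \<theta>))\<^sup>2 \<le> (cmod (h \<theta>) + cmod (E \<theta>))\<^sup>2"
        by (intro power_mono norm_triangle_ineq) simp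
      also have "\<dots> \<le> 2 * (cmod (h \<theta>))\<^sup>2 + 2 * (cmod (E \<theta>))\<^sup>2"
        by (smt (verit) power2_sum zero_le_power2[of "cmod (h \<theta>) - cmod (E \<theta>)"] power2_diff)
      also have "\<dots> \<le> 2 * (cmod (h \<theta>))\<^sup>2 + 2 * B\<^sup>2"
        using power_mono[OF E_bound[of \<theta>] norm_ge_zero] by simp
      finally show "norm ((cmod (h \<theta> + E \<theta>))\<^sup>2) \<le> norm (2 * (cmod (h \<theta>))\<^sup>2 + 2 * B\<^sup>2)"
        by simp
    qed
  qed
  moreover have "AE \<theta> in lborel. \<theta> \<in> {0..2*pi} \<longrightarrow>
      ((\<lambda>r. G (complex_of_real r * cis \<theta>) + D (complex_of_real r * cis \<theta>)) \<longlongrightarrow> h \<theta> + E \<theta>) (at_left 1)"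
    using h_lim by eventually_elim (use lim in \<open>auto intro: tendsto_add\<close>)
  ultimately show ?thesis
    using h_meas E_meas unfolding L2_T_def by (intro exI[of _ "\<lambda>\<theta>. h \<theta> + E \<theta>"]) auto
qed

lemma L2_T_iff_bounded_difference:
  fixes G1 G2 D :: "complex \<Rightarrow> complex" and E :: "real \<Rightarrow> complex"
  assumes diff: "\<And>z. norm z < 1 \<Longrightarrow> G2 z = G1 z + D z"
    and lim: "\<And>\<theta>. ((\<lambda>r. D (complex_of_real r * cis \<theta>)) \<longlongrightarrow> E \<theta>) (at_left 1)"
    and E_meas: "E \<in> borel_measurable lborel" and E_bound: "\<And>\<theta>. norm (E \<theta>) \<le> B"
  shows "L2_T G1 \<longleftrightarrow> L2_T G2"
proof -
  have L2_T_cong: "L2_T F \<longleftrightarrow> L2_T F'" if "\<And>z. norm z < 1 \<Longrightarrow> F z = F' z" for F F'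
  proof -
    have "((\<lambda>r. F (complex_of_real r * cis \<theta>)) \<longlongrightarrow> l) (at_left 1) \<longleftrightarrow>
          ((\<lambda>r. F' (complex_of_real r * cis \<theta>)) \<longlongrightarrow> l) (at_left 1)" for \<theta> l
      using eventually_at_left_real[OF zero_less_one]
      by (intro tendsto_cong, eventually_elim) (simp add: that norm_mult)
    then show ?thesis
      unfolding L2_T_def by simp
  qed
  have "L2_T G1 \<Longrightarrow> L2_T G2"
    using L2_T_add_bounded[OF _ lim E_meas E_bound] L2_T_cong[of G2 "\<lambda>z. G1 z + D z"] diff by blast
  moreover have "L2_T G1" if "L2_T G2"
  proof -
    have "L2_T (\<lambda>z. G2 z + - D z)"
      using that lim E_meas E_bound
      by (intro L2_T_add_bounded[where E="\<lambda>\<theta>. - E \<theta>" and B=B]) (auto intro: tendsto_minus)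
    then show ?thesis
      using L2_T_cong[of G1 "\<lambda>z. G2 z + - D z"] diff by simp
  qed
  ultimately show ?thesis by blast
qed

lemma norm_power_int_le_annulus:
  fixes z :: complex assumes "1/2 \<le> norm z" "norm z \<le> 1"
  shows "norm (z powi k) \<le> 2 ^ nat \<bar>k\<bar>"
proof (cases "0 \<le> k")
  case True
  have "norm z ^ nat k \<le> 1" using assms by (simp add: power_le_one)
  also have "(1::real) \<le> 2 ^ nat \<bar>k\<bar>" by simp
  finally show ?thesis using True by (simp add: power_int_def norm_power)
next
  case False
  have "inverse (norm z) \<le> inverse (1/2)" using assms by (intro le_imp_inverse_le) auto
  then have "norm (inverse z) \<le> 2" by (simp add: norm_inverse)
  then have "norm (inverse z) ^ nat (-k) \<le> 2 ^ nat (-k)" by (intro power_mono) auto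
  then show ?thesis using False by (simp add: power_int_def norm_power)
qed

lemma norm_power_int_diff_le_annulus:
  fixes z t :: complex assumes t: "norm t = 1" and z: "1/2 \<le> norm z" "norm z \<le> 1"
  shows "norm (z powi k - t powi k) \<le> real (nat \<bar>k\<bar>) * 2 ^ nat \<bar>k\<bar> * norm (z - t)"
proof (cases "0 \<le> k")
  case True
  have "norm (z ^ nat k - t ^ nat k) \<le> real (nat k) * norm (z - t)"
    using z t by (intro norm_power_diff) auto
  also have "\<dots> \<le> real (nat \<bar>k\<bar>) * 2 ^ nat \<bar>k\<bar> * norm (z - t)"
    using True by (intro mult_right_mono) (simp_all add: mult_le_cancel_left1)
  finally show ?thesis using True by (simp add: power_int_def)
next
  case False
  define n where "n = nat (-k)"
  have z0: "z \<noteq> 0" and t0: "t \<noteq> 0" using z t by auto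
  \<comment> \<open>halving the inverses brings them into the unit disc, where powers are 1-Lipschitz up to the factor n\<close>
  define x y where "x = inverse z / 2" and "y = inverse t / 2"
  have x: "norm x \<le> 1" and y: "norm y \<le> 1"
    using z t z0 by (simp_all add: x_def y_def norm_inverse norm_divide field_simps)
  have xy: "norm (x - y) \<le> norm (z - t)"
  proof -
    have "norm (x - y) = norm (t - z) / (2 * norm z * norm t)"
      using z0 t0 by (simp add: x_def y_def field_simps norm_divide norm_mult)
    also have "\<dots> \<le> norm (t - z) / 1"
      using z t by (intro divide_left_mono) auto
    finally show ?thesis by (simp add: norm_minus_commute)
  qed
  have "inverse z ^ n - inverse t ^ n = 2 ^ n * (x ^ n - y ^ n)"
    by (simp add: x_def y_def power_divide field_simps)
  then have "norm (inverse z ^ n - inverse t ^ n) = 2 ^ n * norm (x ^ n - y ^ n)"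
    by (simp add: norm_mult norm_power)
  also have "\<dots> \<le> 2 ^ n * (n * norm (x - y))"
    using norm_power_diff[OF x y, of n] by (intro mult_left_mono) auto
  also have "\<dots> \<le> 2 ^ n * (n * norm (z - t))"
    using xy by (intro mult_left_mono) auto
  finally have "norm (inverse z ^ n - inverse t ^ n) \<le> 2 ^ n * (n * norm (z - t))" .
  then show ?thesis using False by (simp add: power_int_def n_def mult_ac)
qed

definition lpoly_annulus_bound :: "(int \<Rightarrow> complex^'d::finite) \<Rightarrow> int \<Rightarrow> int \<Rightarrow> real" where
  "lpoly_annulus_bound a p q = (\<Sum>i\<in>UNIV. \<Sum>k\<in>{p..q}. norm (a k $ i) * ((real (nat \<bar>k\<bar>) + 1) * 2 ^ nat \<bar>k\<bar>))"

lemma lpoly_annulus_bound_component: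
  "(\<Sum>k\<in>{p..q}. norm (a k $ i) * ((real (nat \<bar>k\<bar>) + 1) * 2 ^ nat \<bar>k\<bar>)) \<le> lpoly_annulus_bound a p q"
  unfolding lpoly_annulus_bound_def
  by (rule member_le_sum[where f="\<lambda>i. \<Sum>k\<in>{p..q}. norm (a k $ i) * ((real (nat \<bar>k\<bar>) + 1) * 2 ^ nat \<bar>k\<bar>)"])
    (auto intro!: sum_nonneg)

lemma norm_lpoly_le_annulus:
  fixes z :: complex assumes z: "1/2 \<le> norm z" "norm z \<le> 1"
  shows "norm (lpoly a p q z $ i) \<le> lpoly_annulus_bound a p q"
proof -
  have "norm (lpoly a p q z $ i) \<le> (\<Sum>k\<in>{p..q}. norm (a k $ i) * norm (z powi k))"
    unfolding lpoly_component by (rule order_trans[OF norm_sum]) (simp add: norm_mult mult_ac)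
  also have "\<dots> \<le> (\<Sum>k\<in>{p..q}. norm (a k $ i) * ((real (nat \<bar>k\<bar>) + 1) * 2 ^ nat \<bar>k\<bar>))"
  proof (intro sum_mono mult_left_mono)
    fix k
    have "1 * 2 ^ nat \<bar>k\<bar> \<le> (real (nat \<bar>k\<bar>) + 1) * 2 ^ nat \<bar>k\<bar>"
      by (intro mult_right_mono) auto
    then show "norm (z powi k) \<le> (real (nat \<bar>k\<bar>) + 1) * 2 ^ nat \<bar>k\<bar>"
      using norm_power_int_le_annulus[OF z, of k] by linarith
  qed simp
  also have "\<dots> \<le> lpoly_annulus_bound a p q" by (rule lpoly_annulus_bound_component)
  finally show ?thesis .
qed

lemma norm_lpoly_diff_le_annulus:
  fixes z t :: complex assumes t: "norm t = 1" and z: "1/2 \<le> norm z" "norm z \<le> 1"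
  shows "norm (lpoly a p q z $ i - lpoly a p q t $ i) \<le> lpoly_annulus_bound a p q * norm (z - t)"
proof -
  have "norm (lpoly a p q z $ i - lpoly a p q t $ i) \<le> (\<Sum>k\<in>{p..q}. norm (a k $ i) * norm (z powi k - t powi k))"
    unfolding lpoly_component sum_subtractf[symmetric] left_diff_distrib[symmetric]
    by (rule order_trans[OF norm_sum]) (simp add: norm_mult mult_ac)
  also have "\<dots> \<le> (\<Sum>k\<in>{p..q}. norm (a k $ i) * ((real (nat \<bar>k\<bar>) + 1) * 2 ^ nat \<bar>k\<bar>) * norm (z - t))"
  proof (intro sum_mono)
    fix k
    have "norm (z powi k - t powi k) \<le> (real (nat \<bar>k\<bar>) + 1) * 2 ^ nat \<bar>k\<bar> * norm (z - t)"
      using norm_power_int_diff_le_annulus[OF t z, of k]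
      by (rule order_trans) (intro mult_right_mono, auto)
    then show "norm (a k $ i) * norm (z powi k - t powi k) \<le> norm (a k $ i) * ((real (nat \<bar>k\<bar>) + 1) * 2 ^ nat \<bar>k\<bar>) * norm (z - t)"
      by (simp add: mult_left_mono mult.assoc)
  qed
  also have "\<dots> \<le> lpoly_annulus_bound a p q * norm (z - t)"
    unfolding sum_distrib_right[symmetric] by (intro mult_right_mono lpoly_annulus_bound_component) auto
  finally show ?thesis .
qed

lemma norm_qf_diff_le:
  fixes A :: "complex^'d::finite^'d"
  assumes u: "\<And>i. norm (u $ i) \<le> C" and v: "\<And>i. norm (v $ i) \<le> C"
    and uv: "\<And>i. norm (u $ i - v $ i) \<le> C * \<delta>"
  shows "norm (qf A u - qf A v) \<le> 2 * C * C * \<delta> * (\<Sum>i\<in>UNIV. \<Sum>j\<in>UNIV. norm (A $ i $ j))"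
proof -
  obtain i0 :: 'd where True by simp
  have C0: "0 \<le> C" using u[of i0] norm_ge_zero order_trans by blast
  have C\<delta>: "0 \<le> C * \<delta>" using uv[of i0] norm_ge_zero order_trans by blast
  have term_eq: "u $ i * A $ i $ j * cnj (u $ j) - v $ i * A $ i $ j * cnj (v $ j)
      = A $ i $ j * ((u $ i - v $ i) * cnj (u $ j) + v $ i * cnj (u $ j - v $ j))" for i j
    by (simp add: algebra_simps)
  have term_le: "norm (u $ i * A $ i $ j * cnj (u $ j) - v $ i * A $ i $ j * cnj (v $ j))
      \<le> norm (A $ i $ j) * (2 * C * C * \<delta>)" for i j
  proof -
    have "norm ((u $ i - v $ i) * cnj (u $ j)) \<le> (C * \<delta>) * C"
      unfolding norm_mult complex_mod_cnj by (rule mult_mono[OF uv u C\<delta> norm_ge_zero])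
    moreover have "norm (v $ i * cnj (u $ j - v $ j)) \<le> C * (C * \<delta>)"
      unfolding norm_mult complex_mod_cnj by (rule mult_mono[OF v uv C0 norm_ge_zero])
    ultimately have "norm ((u $ i - v $ i) * cnj (u $ j) + v $ i * cnj (u $ j - v $ j)) \<le> 2 * C * C * \<delta>"
      using norm_triangle_ineq[of "(u $ i - v $ i) * cnj (u $ j)" "v $ i * cnj (u $ j - v $ j)"]
      by (simp add: algebra_simps)
    then show ?thesis
      unfolding term_eq norm_mult by (rule mult_left_mono) simp
  qed
  have "norm (qf A u - qf A v)
      \<le> (\<Sum>i\<in>UNIV. \<Sum>j\<in>UNIV. norm (u $ i * A $ i $ j * cnj (u $ j) - v $ i * A $ i $ j * cnj (v $ j)))"
    unfolding qf_def sum_subtractf[symmetric]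
    by (intro order_trans[OF norm_sum] sum_mono) (simp add: norm_sum)
  also have "\<dots> \<le> (\<Sum>i\<in>UNIV. \<Sum>j\<in>UNIV. norm (A $ i $ j) * (2 * C * C * \<delta>))"
    by (intro sum_mono term_le)
  finally show ?thesis
    by (simp add: sum_distrib_left sum_distrib_right mult_ac)
qed

lemma qf_scale: "qf (\<chi> i j. c * A $ i $ j) v = c * qf A v"
  unfolding qf_def by (simp add: sum_distrib_left mult_ac)

lemma of_real_Re_qf: "psd_matrix A \<Longrightarrow> complex_of_real (Re (qf A v)) = qf A v"
  unfolding psd_matrix_def by (simp add: complex_eq_iff)

lemma qf_integral:
  assumes "\<And>i j. integrable M (\<lambda>t. A t $ i $ j)"
  shows "qf (\<chi> i j. LINT t|M. A t $ i $ j) v = (LINT t|M. qf (A t) v)"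
  unfolding qf_def using assms
  by (simp add: Bochner_Integration.integral_sum integrable_mult_left_iff integrable_mult_right_iff
      integral_mult_left_zero integral_mult_right_zero)

lemma integrable_bounded_factor:
  fixes g h :: "'a \<Rightarrow> complex"
  assumes "integrable M g" "h \<in> borel_measurable M" "\<And>x. x \<in> space M \<Longrightarrow> norm (h x) \<le> c"
  shows "integrable M (\<lambda>x. h x * g x)"
proof (rule Bochner_Integration.integrable_bound[where f="\<lambda>x. c * norm (g x)"])
  show "integrable M (\<lambda>x. c * norm (g x))" using assms(1) by auto
  show "(\<lambda>x. h x * g x) \<in> borel_measurable M"
    using assms(2) borel_measurable_integrable[OF assms(1)] by (rule borel_measurable_times)
  show "AE x in M. norm (h x * g x) \<le> norm (c * norm (g x))"
  proof (intro AE_I2)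
    fix x assume "x \<in> space M"
    then have "norm (h x) * norm (g x) \<le> c * norm (g x)"
      by (intro mult_right_mono assms(3)) auto
    then show "norm (h x * g x) \<le> norm (c * norm (g x))"
      by (simp add: norm_mult)
  qed
qed

lemma integrable_qf:
  assumes "\<And>i j. integrable M (\<lambda>t. A t $ i $ j)" and [measurable]: "\<And>i. (\<lambda>t. v t $ i) \<in> borel_measurable M"
    and "\<And>t i. t \<in> space M \<Longrightarrow> norm (v t $ i) \<le> C"
  shows "integrable M (\<lambda>t. qf (A t) (v t))"
  unfolding qf_def
proof (intro Bochner_Integration.integrable_sum)
  fix i j
  have "norm (v t $ i * cnj (v t $ j)) \<le> C * C" if "t \<in> space M" for t
    unfolding norm_mult complex_mod_cnj using assms(3)[OF that]
    by (intro mult_mono) (auto intro: order_trans[OF norm_ge_zero])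
  then have "integrable M (\<lambda>t. (v t $ i * cnj (v t $ j)) * A t $ i $ j)"
    using assms(1) by (intro integrable_bounded_factor) auto
  then show "integrable M (\<lambda>t. v t $ i * A t $ i $ j * cnj (v t $ j))"
    by (simp add: mult_ac)
qed

lemma norm_cara_kernel_le:
  fixes t z :: complex assumes "norm t = 1" "norm z < 1"
  shows "norm ((t + z) / (t - z)) \<le> (1 + norm z) / (1 - norm z)"
  unfolding norm_divide using assms norm_triangle_ineq[of t z] norm_triangle_ineq2[of t z]
  by (intro frac_le) auto

lemma integrable_cara_kernel_qf:
  assumes mm: "matrix_measure M W" and z: "norm z < 1"
    and v_meas: "\<And>i. (\<lambda>t. v t $ i) \<in> borel_measurable M"
    and v_bound: "\<And>t i. t \<in> space M \<Longrightarrow> norm (v t $ i) \<le> C"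
  shows "integrable M (\<lambda>t. (t + z) / (t - z) * qf (W t) (v t))"
proof (rule integrable_bounded_factor)
  note [measurable] = matrix_measureD(3)[OF mm]
  show "integrable M (\<lambda>t. qf (W t) (v t))"
    by (rule integrable_qf[OF matrix_measureD(4)[OF mm] v_meas v_bound])
  show "(\<lambda>t. (t + z) / (t - z)) \<in> borel_measurable M" by measurable
  show "norm ((t + z) / (t - z)) \<le> (1 + norm z) / (1 - norm z)" if "t \<in> space M" for t
    using that z matrix_measureD(2)[OF mm] by (intro norm_cara_kernel_le) auto
qed

lemma qf_cara_mat_eq_integral:
  assumes mm: "matrix_measure M W" and z: "norm z < 1"
  shows "qf (cara_mat M W z) v = (LINT t|M. (t + z) / (t - z) * qf (W t) v)"
proof -
  let ?A = "\<lambda>t. \<chi> i j. (t + z) / (t - z) * W t $ i $ j"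
  have "cara_mat M W z = (\<chi> i j. LINT t|M. ?A t $ i $ j)"
    by (simp add: cara_mat_def)
  moreover have "integrable M (\<lambda>t. ?A t $ i $ j)" for i j
  proof -
    note [measurable] = matrix_measureD(3,5)[OF mm]
    have "integrable M (\<lambda>t. (t + z) / (t - z) * W t $ i $ j)"
      using matrix_measureD(2,4)[OF mm] z
      by (intro integrable_bounded_factor[where c="(1 + norm z) / (1 - norm z)"]) (auto intro: norm_cara_kernel_le)
    then show ?thesis by simp
  qed
  ultimately show ?thesis
    by (simp only: qf_integral qf_scale)
qed

lemma cara_density_qf_eq_integral:
  assumes mm: "matrix_measure M W" and [measurable]: "\<And>i. (\<lambda>t. v t $ i) \<in> borel_measurable M"
  shows "cara (density M (\<lambda>t. ennreal (Re (qf (W t) (v t))))) z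
    = (LINT t|M. (t + z) / (t - z) * qf (W t) (v t))"
proof -
  note [measurable] = matrix_measureD(3,5)[OF mm]
  have "cara (density M (\<lambda>t. ennreal (Re (qf (W t) (v t))))) z
      = (LINT t|M. Re (qf (W t) (v t)) *\<^sub>R ((t + z) / (t - z)))"
    unfolding cara_def using matrix_measureD(6)[OF mm]
    by (intro integral_density) (auto simp: psd_matrix_def)
  also have "\<dots> = (LINT t|M. (t + z) / (t - z) * qf (W t) (v t))"
    using matrix_measureD(6)[OF mm]
    by (intro Bochner_Integration.integral_cong) (simp_all add: scaleR_conv_of_real of_real_Re_qf)
  finally show ?thesis .
qed

definition cara_diff_kernel ::
    "(complex \<Rightarrow> complex^'d::finite^'d) \<Rightarrow> (complex \<Rightarrow> complex^'d) \<Rightarrow> complex \<Rightarrow> complex \<Rightarrow> complex" where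
  "cara_diff_kernel W f t z = (t + z) / (t - z) * (qf (W t) (f z) - qf (W t) (f t))"

lemma qf_cara_mat_lpoly_eq:
  assumes mm: "matrix_measure M W" and z: "norm z < 1"
  shows "qf (cara_mat M W z) (lpoly a p q z)
    = cara (density M (\<lambda>t. ennreal (Re (qf (W t) (lpoly a p q t))))) z
      + (LINT t|M. cara_diff_kernel W (lpoly a p q) t z)"
proof -
  note [measurable] = matrix_measureD(3)[OF mm]
  have "integrable M (\<lambda>t. (t + z) / (t - z) * qf (W t) (lpoly a p q z))"
    by (rule integrable_cara_kernel_qf[OF mm z, where C="\<Sum>i\<in>UNIV. norm (lpoly a p q z $ i)"])
      (auto intro: member_le_sum)
  moreover have "integrable M (\<lambda>t. (t + z) / (t - z) * qf (W t) (lpoly a p q t))"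
    by (rule integrable_cara_kernel_qf[OF mm z, where C="lpoly_annulus_bound a p q"])
      (auto simp: matrix_measureD(2)[OF mm] intro: norm_lpoly_le_annulus)
  ultimately have "(LINT t|M. cara_diff_kernel W (lpoly a p q) t z)
      = qf (cara_mat M W z) (lpoly a p q z) - (LINT t|M. (t + z) / (t - z) * qf (W t) (lpoly a p q t))"
    unfolding cara_diff_kernel_def right_diff_distrib
    by (simp add: qf_cara_mat_eq_integral[OF mm z])
  then show ?thesis
    by (simp add: cara_density_qf_eq_integral[OF mm])
qed

lemma lpoly_component_field_differentiable:
  assumes "z \<noteq> 0"
  shows "(\<lambda>z. lpoly a p q z $ i) field_differentiable (at z)"
proof -
  have "((\<lambda>z. lpoly a p q z $ i) has_field_derivative
      (\<Sum>k\<in>{p..q}. of_int k * z powi (k - 1) * 1 * a k $ i)) (at z)"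
    unfolding lpoly_component using assms
    by (intro DERIV_sum DERIV_cmult_right DERIV_power_int DERIV_ident) auto
  then show ?thesis
    unfolding field_differentiable_def by blast
qed

lemma qf_lpoly_differentiable:
  assumes "z \<noteq> 0"
  shows "(\<lambda>z. qf A (lpoly a p q z)) differentiable (at z)"
proof -
  have "(\<lambda>z. lpoly a p q z $ i) differentiable (at z)" for i
    using assms by (intro field_differentiable_imp_differentiable lpoly_component_field_differentiable)
  then show ?thesis
    unfolding qf_def by (intro differentiable_sum differentiable_mult ballI) (auto simp: differentiable_cnj_iff)
qed

lemma tendsto_difference_quotient:
  fixes \<phi> :: "real \<Rightarrow> complex"
  assumes "\<phi> differentiable (at x)"
  shows "((\<lambda>y. (\<phi> y - \<phi> x) / of_real (y - x)) \<longlongrightarrow> vector_derivative \<phi> (at x)) (at x)"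
proof -
  have "(\<phi> has_vector_derivative vector_derivative \<phi> (at x)) (at x)"
    using assms vector_derivative_works by blast
  then show ?thesis
    unfolding has_vector_derivative_complex_iff has_field_derivative_iff tendsto_complex_iff by simp
qed

lemma tendsto_of_real_mult_at_left: "((\<lambda>r. of_real r * c) \<longlongrightarrow> (c::complex)) (at_left 1)"
  using tendsto_mult_right[OF tendsto_of_real[OF tendsto_ident_at], of c 1 "{..<1}"] by simp

lemma cara_diff_kernel_radial_limit:
  assumes t: "norm t = 1"
  shows "\<exists>l. ((\<lambda>r. cara_diff_kernel W (lpoly a p q) t (of_real r * cis \<theta>)) \<longlongrightarrow> l) (at_left 1)"
proof (cases "t = cis \<theta>")
  case False
  have qf_cont: "isCont (\<lambda>z. qf (W t) (lpoly a p q z)) (cis \<theta>)"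
    by (intro differentiable_imp_continuous_within qf_lpoly_differentiable) simp
  have "isCont (cara_diff_kernel W (lpoly a p q) t) (cis \<theta>)"
    unfolding cara_diff_kernel_def using False
    by (intro continuous_mult continuous_divide continuous_add continuous_diff continuous_const
        continuous_ident qf_cont) auto
  then show ?thesis
    using isCont_tendsto_compose[OF _ tendsto_of_real_mult_at_left] by blast
next
  case True
  have t0: "t \<noteq> 0" using t by auto
  \<comment> \<open>on the diagonal the kernel is -(1 + r) times a difference quotient of the smooth
      function \<phi>, so it converges to -2 times the derivative of \<phi> at 1\<close>
  define \<phi> where "\<phi> r = qf (W t) (lpoly a p q (of_real r * t))" for r :: real
  have "bounded_linear (\<lambda>r::real. of_real r * t)"
    by (rule bounded_linear_compose[OF bounded_linear_mult_left bounded_linear_of_real])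
  then have "(\<lambda>r. of_real r * t) differentiable (at (1::real))"
    by (rule bounded_linear_imp_differentiable)
  moreover have "(\<lambda>z. qf (W t) (lpoly a p q z)) differentiable (at (of_real 1 * t))"
    using qf_lpoly_differentiable[OF t0] by simp
  ultimately have "\<phi> differentiable (at 1)"
    unfolding \<phi>_def by (rule differentiable_compose[rotated])
  then have "((\<lambda>r. (\<phi> r - \<phi> 1) / of_real (r - 1)) \<longlongrightarrow> vector_derivative \<phi> (at 1)) (at_left 1)"
    by (rule filterlim_mono[OF tendsto_difference_quotient order_refl at_le]) simp
  then have "((\<lambda>r. - of_real (1 + r) * ((\<phi> r - \<phi> 1) / of_real (r - 1)))
      \<longlongrightarrow> - of_real (1 + 1) * vector_derivative \<phi> (at 1)) (at_left 1)"
    by (intro tendsto_mult tendsto_minus tendsto_of_real tendsto_add tendsto_const tendsto_ident_at)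
  moreover have "cara_diff_kernel W (lpoly a p q) t (of_real r * cis \<theta>)
      = - of_real (1 + r) * ((\<phi> r - \<phi> 1) / of_real (r - 1))" for r
  proof -
    have "t + of_real r * t = of_real (1 + r) * t" "t - of_real r * t = - (of_real (r - 1) * t)"
      by (simp_all add: algebra_simps)
    then have frac: "(t + of_real r * t) / (t - of_real r * t) = - (of_real (1 + r) / of_real (r - 1))"
      by (simp only: divide_minus_right mult_divide_mult_cancel_right[OF t0])
    have "cara_diff_kernel W (lpoly a p q) t (of_real r * cis \<theta>)
        = (t + of_real r * t) / (t - of_real r * t) * (\<phi> r - \<phi> 1)"
      unfolding cara_diff_kernel_def \<phi>_def True[symmetric] by simp
    also have "\<dots> = - of_real (1 + r) * ((\<phi> r - \<phi> 1) / of_real (r - 1))"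
      unfolding frac
      by (simp only: mult_minus_left divide_minus_left times_divide_eq_left times_divide_eq_right)
    finally show ?thesis .
  qed
  ultimately show ?thesis
    by auto
qed

lemma borel_measurable_cara_diff_kernel:
  assumes "h \<in> borel_measurable N" "g \<in> borel_measurable N"
    and "\<And>i j. (\<lambda>x. W (h x) $ i $ j) \<in> borel_measurable N"
  shows "(\<lambda>x. cara_diff_kernel W (lpoly a p q) (h x) (g x)) \<in> borel_measurable N"
  unfolding cara_diff_kernel_def
  by (intro borel_measurable_times borel_measurable_divide borel_measurable_add borel_measurable_diff
      borel_measurable_qf borel_measurable_lpoly assms)

lemma norm_cara_diff_kernel_le:
  fixes z t :: complex assumes t: "norm t = 1" and z: "1/2 \<le> norm z" "norm z < 1"
  shows "norm (cara_diff_kernel W (lpoly a p q) t z)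
    \<le> 4 * (lpoly_annulus_bound a p q)\<^sup>2 * (\<Sum>i\<in>UNIV. \<Sum>j\<in>UNIV. norm (W t $ i $ j))"
proof -
  let ?C = "lpoly_annulus_bound a p q" and ?S = "\<Sum>i\<in>UNIV. \<Sum>j\<in>UNIV. norm (W t $ i $ j)"
  have tz: "t \<noteq> z" using t z by auto
  have "norm (qf (W t) (lpoly a p q z) - qf (W t) (lpoly a p q t)) \<le> 2 * ?C * ?C * norm (z - t) * ?S"
    using t z by (intro norm_qf_diff_le norm_lpoly_le_annulus norm_lpoly_diff_le_annulus) auto
  moreover have "norm (t + z) \<le> 2" using t z norm_triangle_ineq[of t z] by simp
  moreover have "0 \<le> ?S" by (intro sum_nonneg) auto
  ultimately have "norm (t + z) * norm (qf (W t) (lpoly a p q z) - qf (W t) (lpoly a p q t))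
      \<le> 2 * (2 * ?C * ?C * norm (z - t) * ?S)"
    by (intro mult_mono) auto
  then have "norm (cara_diff_kernel W (lpoly a p q) t z) * norm (t - z) \<le> 4 * ?C\<^sup>2 * ?S * norm (t - z)"
    using tz by (simp add: cara_diff_kernel_def norm_mult norm_divide power2_eq_square norm_minus_commute mult_ac)
  then show ?thesis using tz by simp
qed

lemma tendsto_integral_at_left_dominated:
  fixes K :: "'a \<Rightarrow> real \<Rightarrow> 'b::{banach, second_countable_topology}"
  assumes "c < x"
    and K_meas: "\<And>r. (\<lambda>t. K t r) \<in> borel_measurable M" and w: "integrable M w"
    and K_bound: "\<And>t r. t \<in> space M \<Longrightarrow> c < r \<Longrightarrow> r < x \<Longrightarrow> norm (K t r) \<le> w t"
    and K_lim: "\<And>t. t \<in> space M \<Longrightarrow> (K t \<longlongrightarrow> L t) (at_left x)"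
  shows "((\<lambda>r. LINT t|M. K t r) \<longlongrightarrow> (LINT t|M. L t)) (at_left x)"
  using \<open>c < x\<close>
proof (rule tendsto_at_left_sequentially)
  fix S :: "nat \<Rightarrow> real"
  assume S_less: "\<And>n. S n < x" and S_greater: "\<And>n. c < S n" and "S \<longlonglongrightarrow> x"
  then have S_lim: "filterlim S (at_left x) sequentially"
    by (intro tendsto_imp_filterlim_at_left) auto
  have lim: "(\<lambda>n. K t (S n)) \<longlonglongrightarrow> L t" if "t \<in> space M" for t
    using filterlim_compose[OF K_lim[OF that] S_lim] .
  show "(\<lambda>n. LINT t|M. K t (S n)) \<longlonglongrightarrow> (LINT t|M. L t)"
  proof (rule integral_dominated_convergence[OF _ K_meas w])
    show "L \<in> borel_measurable M"
      using K_meas lim by (rule borel_measurable_LIMSEQ_metric)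
    show "AE t in M. (\<lambda>n. K t (S n)) \<longlonglongrightarrow> L t"
      using lim by (rule AE_I2)
    show "AE t in M. norm (K t (S n)) \<le> w t" for n
      using K_bound S_less S_greater by (intro AE_I2) auto
  qed
qed

lemma radial_limits_integral:
  fixes K :: "'a \<Rightarrow> complex \<Rightarrow> complex"
  assumes "finite_measure M"
    and K_meas: "\<And>r. (\<lambda>(\<theta>, t). K t (of_real r * cis \<theta>)) \<in> borel_measurable (lborel \<Otimes>\<^sub>M M)"
    and w: "integrable M w"
    and K_bound: "\<And>t z. t \<in> space M \<Longrightarrow> 1/2 \<le> norm z \<Longrightarrow> norm z < 1 \<Longrightarrow> norm (K t z) \<le> w t"
    and K_lim: "\<And>t \<theta>. t \<in> space M \<Longrightarrow> \<exists>l. ((\<lambda>r. K t (of_real r * cis \<theta>)) \<longlongrightarrow> l) (at_left 1)"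
  obtains E where "E \<in> borel_measurable lborel" "\<And>\<theta>. norm (E \<theta>) \<le> integral\<^sup>L M w"
    "\<And>\<theta>. ((\<lambda>r. LINT t|M. K t (of_real r * cis \<theta>)) \<longlongrightarrow> E \<theta>) (at_left 1)"
proof -
  interpret finite_measure M by fact
  define D where "D r \<theta> = (LINT t|M. K t (of_real r * cis \<theta>))" for r \<theta>
  define E where "E \<theta> = (LINT t|M. Lim (at_left 1) (\<lambda>r. K t (of_real r * cis \<theta>)))" for \<theta>
  have section_meas: "(\<lambda>t. K t (of_real r * cis \<theta>)) \<in> borel_measurable M" for r \<theta>
    using measurable_Pair2[OF K_meas, of \<theta>] by simp
  have bound: "norm (K t (of_real r * cis \<theta>)) \<le> w t" if "t \<in> space M" "1/2 < r" "r < 1" for t r \<theta>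
    using that by (intro K_bound) (auto simp: norm_mult)
  have radial_Lim: "((\<lambda>r. K t (of_real r * cis \<theta>)) \<longlongrightarrow> Lim (at_left 1) (\<lambda>r. K t (of_real r * cis \<theta>))) (at_left 1)"
    if "t \<in> space M" for t \<theta>
    using K_lim[OF that] tendsto_Lim[OF trivial_limit_at_left_real] by blast
  have lim: "((\<lambda>r. D r \<theta>) \<longlongrightarrow> E \<theta>) (at_left 1)" for \<theta>
    unfolding D_def E_def
    by (rule tendsto_integral_at_left_dominated[where c="1/2" and K="\<lambda>t r. K t (of_real r * cis \<theta>)",
          OF _ section_meas w bound radial_Lim]) auto
  moreover have "norm (E \<theta>) \<le> integral\<^sup>L M w" for \<theta>
  proof (rule tendsto_upperbound[OF tendsto_norm[OF lim]])
    have "\<forall>\<^sub>F r in at_left 1. r \<in> {1/2<..<(1::real)}"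
      by (rule eventually_at_left_real) simp
    then show "\<forall>\<^sub>F r in at_left 1. norm (D r \<theta>) \<le> integral\<^sup>L M w"
    proof eventually_elim
      case (elim r)
      then have "integrable M (\<lambda>t. K t (of_real r * cis \<theta>))"
        using bound by (intro Bochner_Integration.integrable_bound[OF w section_meas] AE_I2)
          (auto intro: order_trans[OF _ abs_ge_self])
      then have "(LINT t|M. norm (K t (of_real r * cis \<theta>))) \<le> integral\<^sup>L M w"
        using elim bound by (intro integral_mono integrable_norm w) auto
      then show ?case
        unfolding D_def by (rule order_trans[OF integral_norm_bound])
    qed
  qed simp
  moreover have "E \<in> borel_measurable lborel"
  proof (rule borel_measurable_LIMSEQ_metric)
    show "(\<lambda>\<theta>. D (1 - 1 / Suc (Suc n)) \<theta>) \<in> borel_measurable lborel" for n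
      unfolding D_def by (rule borel_measurable_lebesgue_integral[OF K_meas])
    have "(\<lambda>n. 1 - 1 / real (Suc (Suc n))) \<longlonglongrightarrow> 1 - 0"
      by (intro tendsto_diff tendsto_const LIMSEQ_Suc lim_inverse_n')
    then have "filterlim (\<lambda>n. 1 - 1 / real (Suc (Suc n))) (at_left 1) sequentially"
      by (intro tendsto_imp_filterlim_at_left) auto
    then show "(\<lambda>n. D (1 - 1 / Suc (Suc n)) \<theta>) \<longlonglongrightarrow> E \<theta>" for \<theta>
      using filterlim_compose[OF lim] by blast
  qed
  ultimately show ?thesis
    using that[of E] unfolding D_def by blast
qed

theorem proposition4:
  fixes M :: "complex measure" and W :: "complex \<Rightarrow> complex^'d::finite^'d"
    and a :: "int \<Rightarrow> complex^'d" and p q :: int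
  assumes "pd_matrix_measure M W" and "p \<le> q"
  shows "L2_T (cara (density M (\<lambda>t. ennreal (Re (qf (W t) (lpoly a p q t))))))
         \<longleftrightarrow> L2_T (\<lambda>z. qf (cara_mat M W z) (lpoly a p q z))"
proof -
  \<comment> \<open>only the underlying matrix measure is used\<close>
  have mm: "matrix_measure M W"
    using assms(1) unfolding pd_matrix_measure_def by blast
  note [measurable] = matrix_measureD(3,5)[OF mm]
  define w where "w t = 4 * (lpoly_annulus_bound a p q)\<^sup>2 * (\<Sum>i\<in>UNIV. \<Sum>j\<in>UNIV. norm (W t $ i $ j))" for t
  obtain E where "E \<in> borel_measurable lborel" "\<And>\<theta>. norm (E \<theta>) \<le> integral\<^sup>L M w"
    "\<And>\<theta>. ((\<lambda>r. LINT t|M. cara_diff_kernel W (lpoly a p q) t (of_real r * cis \<theta>)) \<longlongrightarrow> E \<theta>) (at_left 1)"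
  proof (rule radial_limits_integral[OF matrix_measureD(1)[OF mm]])
    show "(\<lambda>(\<theta>, t). cara_diff_kernel W (lpoly a p q) t (of_real r * cis \<theta>)) \<in> borel_measurable (lborel \<Otimes>\<^sub>M M)" for r
      unfolding split_beta' by (intro borel_measurable_cara_diff_kernel) measurable
    show "integrable M w"
      unfolding w_def using matrix_measureD(4)[OF mm] by (intro integrable_mult_right Bochner_Integration.integrable_sum integrable_norm) auto
  qed (use matrix_measureD(2)[OF mm] in \<open>auto simp: w_def intro: norm_cara_diff_kernel_le cara_diff_kernel_radial_limit\<close>)
  then show ?thesis
    by (intro L2_T_iff_bounded_difference[where D="\<lambda>z. LINT t|M. cara_diff_kernel W (lpoly a p q) t z"]
        qf_cara_mat_lpoly_eq[OF mm])
qed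

end
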